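(* Let $u,c,d,v,w$ be points on the unit circle $\partial\mathbb{B}^2$, occurring in this order along the circle. Let $a=\mathrm{LIS}[u,v,c,w]$ and $b=\mathrm{LIS}[u,v,d,w]$. Then: (1) $|u,a,b,v|=|u,c,d,v|$. (2) The function $F(z)=\mathrm{LIS}[u,v,z,w]$ maps the arc of the unit circle with endpoints $u$ and $v$ that contains $c,d$ onto the segment $[u,v]$, and it is the restriction of the Möbius transformation \[ F(z)=\frac{(uv-uw-vw)z+uvw}{-wz+uv}. \] In particular $F(u)=u$, $F(v)=v$, $a=F(c)$ and $b=F(d)$. (3) If the lines $L[u,v]$ and $L[c,d]$ are parallel, then $uv=cd$ and \[ a=\frac{(u+v-d)w-cd}{w-d},\qquad b=\frac{(u+v-c)w-cd}{w-c}. \]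
   Context: Points of $\mathbb{R}^2$ are identified with complex numbers. $L[x,y]$ is the line through $x\ne y$; $\mathrm{LIS}[x,y,z,t]$ denotes the intersection point of the lines $L[x,y]$ and $L[z,t]$ (when it is a single point). For points $x,y,z,t$, $|x,y,z,t|=\frac{|x-z||y-t|}{|x-y||z-t|}$. *)

theory Defs
  imports "HOL-Analysis.Analysis"
begin

definition Lline :: "complex \<Rightarrow> complex \<Rightarrow> complex set" where
  "Lline x y = {z. \<exists>t::real. z = x + of_real t * (y - x)}"

text \<open>Intersection point of the lines L[x,y] and L[z,t] (meaningful when unique).\<close>
definition LIS :: "complex \<Rightarrow> complex \<Rightarrow> complex \<Rightarrow> complex \<Rightarrow> complex" where
  "LIS x y z t = (THE p. p \<in> Lline x y \<and> p \<in> Lline z t)"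

definition abs_cross_ratio :: "complex \<Rightarrow> complex \<Rightarrow> complex \<Rightarrow> complex \<Rightarrow> real" where
  "abs_cross_ratio x y z t = (cmod (x - z) * cmod (y - t)) / (cmod (x - y) * cmod (z - t))"

definition ccw3 :: "complex \<Rightarrow> complex \<Rightarrow> complex \<Rightarrow> bool" where
  "ccw3 x y z \<longleftrightarrow> cmod x = 1 \<and>
     (\<exists>s t. 0 < s \<and> s < t \<and> t < 2 * pi \<and> y = x * cis s \<and> z = x * cis t)"

definition ccw5 :: "complex \<Rightarrow> complex \<Rightarrow> complex \<Rightarrow> complex \<Rightarrow> complex \<Rightarrow> bool" where
  "ccw5 p1 p2 p3 p4 p5 \<longleftrightarrow> cmod p1 = 1 \<and>
     (\<exists>s2 s3 s4 s5. 0 < s2 \<and> s2 < s3 \<and> s3 < s4 \<and> s4 < s5 \<and> s5 < 2 * pi \<and>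
        p2 = p1 * cis s2 \<and> p3 = p1 * cis s3 \<and> p4 = p1 * cis s4 \<and> p5 = p1 * cis s5)"

definition in_order5 :: "complex \<Rightarrow> complex \<Rightarrow> complex \<Rightarrow> complex \<Rightarrow> complex \<Rightarrow> bool" where
  "in_order5 p1 p2 p3 p4 p5 \<longleftrightarrow> ccw5 p1 p2 p3 p4 p5 \<or> ccw5 p5 p4 p3 p2 p1"

definition arc_ccw :: "complex \<Rightarrow> complex \<Rightarrow> complex set" where
  "arc_ccw x y = {z. cmod z = 1 \<and> (z = x \<or> z = y \<or> ccw3 x z y)}"

definition arc_containing :: "complex \<Rightarrow> complex \<Rightarrow> complex \<Rightarrow> complex set" where
  "arc_containing x y c = (if ccw3 x c y then arc_ccw x y else arc_ccw y x)"

definition parallel_lines :: "complex \<Rightarrow> complex \<Rightarrow> complex \<Rightarrow> complex \<Rightarrow> bool" where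
  "parallel_lines x y z t \<longleftrightarrow> (\<exists>k::real. y - x = of_real k * (t - z))"

end

theory Submission
  imports Defs
begin

(* A point p lies on the chord through the unit complex numbers x, y iff p + x y cnj p = x + y.
   Solving two such equations gives LIS[u,v,z,w] = F z := lis_mobius u v w z, and the factorisations
   u - F z = v (u - z) (u - w) / (u v - w z) and F z - v = - u (v - z) (v - w) / (u v - w z) make the
   cross ratio invariant.  Writing v = u cis \<beta>, w = u cis \<omega> and z = u cis t, with angles measured
   in the orientation of the five points, F z = u + T t (v - u) for the real function
   T t = sin (t/2) sin (\<omega>/2) / (sin ((\<omega> + t - \<beta>)/2) sin (\<beta>/2)).  A product-to-sum identity
   gives 0 <= T <= 1 on [0, \<beta>], and T 0 = 0, T \<beta> = 1 with continuity yield the whole segment.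
   For parallel chords, conjugating v - u = k (d - c) gives 1/v - 1/u = k (1/d - 1/c), hence u v = c d. *)

lemma cnj_unit: "cmod u = 1 \<Longrightarrow> cnj u = 1 / u"
  using divide_conv_cnj[of u 1] by simp

lemma mem_Lline_unit_iff:
  assumes "cmod u = 1" "cmod v = 1" "u \<noteq> v"
  shows "p \<in> Lline u v \<longleftrightarrow> p + u * v * cnj p = u + v"
proof
  have nz: "u \<noteq> 0" "v \<noteq> 0" using assms by auto
  assume "p \<in> Lline u v"
  then obtain t :: real where p: "p = u + of_real t * (v - u)" unfolding Lline_def by auto
  show "p + u * v * cnj p = u + v"
    unfolding p using nz by (simp add: cnj_unit assms field_simps)
next
  have nz: "u \<noteq> 0" "v \<noteq> 0" "v - u \<noteq> 0" using assms by auto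
  assume chord: "p + u * v * cnj p = u + v"
  define q where "q = (p - u) / (v - u)"
  have cnj_p: "cnj p = (u + v - p) / (u * v)" using chord nz by (simp add: field_simps)
  have "cnj q = q"
    unfolding q_def complex_cnj_divide complex_cnj_diff cnj_p using nz by (simp add: cnj_unit assms field_simps)
  then have "q = of_real (Re q)" by (metis Reals_cnj_iff complex_is_Real_iff of_real_Re)
  moreover have "p = u + q * (v - u)" unfolding q_def using nz by simp
  ultimately show "p \<in> Lline u v" unfolding Lline_def by (metis (mono_tags) mem_Collect_eq)
qed

definition lis_mobius :: "complex \<Rightarrow> complex \<Rightarrow> complex \<Rightarrow> complex \<Rightarrow> complex" where
  "lis_mobius u v w z = ((u * v - u * w - v * w) * z + u * v * w) / (u * v - w * z)"

lemma LIS_unit_circle: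
  assumes unit: "cmod u = 1" "cmod v = 1" "cmod z = 1" "cmod w = 1"
    and "u \<noteq> v" "z \<noteq> w" "u * v \<noteq> z * w"
  shows "LIS u v z w = lis_mobius u v w z"
proof -
  have nz: "u \<noteq> 0" "v \<noteq> 0" "z \<noteq> 0" "w \<noteq> 0" "u * v - z * w \<noteq> 0" "u * v - w * z \<noteq> 0"
    using assms by (auto simp: mult.commute)
  note chord_uv = mem_Lline_unit_iff[OF unit(1,2) \<open>u \<noteq> v\<close>]
    and chord_zw = mem_Lline_unit_iff[OF unit(3,4) \<open>z \<noteq> w\<close>]
  define P where "P = lis_mobius u v w z"
  have cnj_P: "cnj P = (u + v - z - w) / (u * v - w * z)"
    unfolding P_def lis_mobius_def using nz by (simp add: cnj_unit unit field_simps)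
  have chord_P: "P + a * b * cnj P = a + b"
    if "(u * v - u * w - v * w) * z + u * v * w + a * b * (u + v - z - w) = (a + b) * (u * v - w * z)"
    for a b
  proof -
    have "P + a * b * cnj P
        = ((u * v - u * w - v * w) * z + u * v * w + a * b * (u + v - z - w)) / (u * v - w * z)"
      unfolding cnj_P unfolding P_def lis_mobius_def by (simp add: add_divide_distrib)
    then show ?thesis unfolding that using nz by simp
  qed
  have "P + u * v * cnj P = u + v" "P + z * w * cnj P = z + w"
    by (rule chord_P, algebra)+
  then have on_both: "P \<in> Lline u v \<and> P \<in> Lline z w" using chord_uv chord_zw by simp
  have "p = P" if "p \<in> Lline u v \<and> p \<in> Lline z w" for p
  proof -
    have chords: "p + u * v * cnj p = u + v" "p + z * w * cnj p = z + w"
      using that chord_uv chord_zw by simp_all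
    have "(u * v - z * w) * cnj p = (p + u * v * cnj p) - (p + z * w * cnj p)"
      by (simp add: algebra_simps)
    then have "(u * v - z * w) * cnj p = u + v - z - w" unfolding chords by simp
    then have "cnj p = cnj P" unfolding cnj_P mult.commute[of w z] using nz by (simp add: field_simps)
    then show ?thesis by simp
  qed
  with on_both show ?thesis unfolding LIS_def P_def by (rule the_equality)
qed

lemma lis_mobius_diffs:
  assumes "u * v \<noteq> w * z"
  shows "u - lis_mobius u v w z = v * (u - z) * (u - w) / (u * v - w * z)"
    and "lis_mobius u v w z - v = - (u * (v - z) * (v - w)) / (u * v - w * z)"
  using assms unfolding lis_mobius_def by (simp_all add: field_simps; algebra)+

lemma lis_mobius_det_nonzero:
  fixes u v w :: complex
  assumes "u \<noteq> 0" "v \<noteq> 0" "u \<noteq> w" "v \<noteq> w"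
  shows "(u * v - u * w - v * w) * (u * v) - u * v * w * (- w) \<noteq> 0"
proof -
  have "(u * v - u * w - v * w) * (u * v) - u * v * w * (- w) = u * v * ((u - w) * (v - w))"
    by algebra
  then show ?thesis using assms by simp
qed

lemma abs_cross_ratio_lis_mobius:
  assumes "cmod u = 1" "cmod v = 1" "u * v \<noteq> w * c" "u * v \<noteq> w * d" "u \<noteq> w" "v \<noteq> w"
  shows "abs_cross_ratio u (lis_mobius u v w c) (lis_mobius u v w d) v = abs_cross_ratio u c d v"
proof -
  have "cmod (u - w) \<noteq> 0" "cmod (v - w) \<noteq> 0" "cmod (u * v - w * c) \<noteq> 0" "cmod (u * v - w * d) \<noteq> 0"
    using assms by auto
  then show ?thesis
    unfolding abs_cross_ratio_def lis_mobius_diffs[OF assms(3)] lis_mobius_diffs[OF assms(4)]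
    using assms(1,2) by (simp add: norm_mult norm_divide norm_minus_commute)
qed

lemma parallel_lines_unit_circle:
  assumes unit: "cmod u = 1" "cmod v = 1" "cmod c = 1" "cmod d = 1" and "u \<noteq> v"
    and "parallel_lines u v c d"
  shows "u * v = c * d"
proof -
  obtain k :: real where k: "v - u = of_real k * (d - c)"
    using assms unfolding parallel_lines_def by auto
  have nz: "u \<noteq> 0" "v \<noteq> 0" "c \<noteq> 0" "d \<noteq> 0" using unit by auto
  have "cnj (v - u) = of_real k * cnj (d - c)" using k by simp
  then have "(u - v) / (u * v) = of_real k * (c - d) / (c * d)"
    using nz by (simp add: cnj_unit unit field_simps)
  also have "of_real k * (c - d) = u - v" using k by (simp add: algebra_simps)
  finally show ?thesis using \<open>u \<noteq> v\<close> nz by (simp add: field_simps)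
qed

lemma lis_mobius_parallel:
  assumes "u * v = c * d" "c \<noteq> 0" "d \<noteq> w"
  shows "lis_mobius u v w c = ((u + v - d) * w - c * d) / (w - d)"
proof -
  have "u * v - w * c = c * (d - w)" using assms(1) by algebra
  then have "u * v - w * c \<noteq> 0" "w - d \<noteq> 0" using assms(2,3) by auto
  moreover have "((u * v - u * w - v * w) * c + u * v * w) * (w - d)
      = ((u + v - d) * w - c * d) * (u * v - w * c)"
    using assms(1) by algebra
  ultimately show ?thesis unfolding lis_mobius_def by (simp add: frac_eq_eq)
qed

lemma lis_mobius_parallel_chords:
  assumes "cmod u = 1" "cmod v = 1" "cmod c = 1" "cmod d = 1" "u \<noteq> v" "c \<noteq> w" "d \<noteq> w"
    and "parallel_lines u v c d"
  shows "u * v = c * d \<and> lis_mobius u v w c = ((u + v - d) * w - c * d) / (w - d)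
    \<and> lis_mobius u v w d = ((u + v - c) * w - c * d) / (w - c)"
proof -
  have "u * v = c * d" using parallel_lines_unit_circle assms by blast
  moreover have "c \<noteq> 0" "d \<noteq> 0" using assms by auto
  ultimately show ?thesis
    using lis_mobius_parallel[of u v c d w] lis_mobius_parallel[of u v d c w] assms
    by (simp add: mult.commute)
qed

lemma cis_neq_cis:
  assumes "0 < \<bar>x - y\<bar>" "\<bar>x - y\<bar> < 2 * pi"
  shows "cis x \<noteq> cis y"
proof
  assume "cis x = cis y"
  then have "cos (x - y) = 1" by (metis cis.sel(1) cis_divide divide_self_if one_complex.sel(1) cis_neq_zero)
  then obtain n :: int where "x - y = of_int n * 2 * pi" by (auto simp: cos_one_2pi_int)
  then have "0 < \<bar>of_int n\<bar> * (2 * pi)" "\<bar>of_int n\<bar> * (2 * pi) < 1 * (2 * pi)"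
    using assms by (simp_all add: abs_mult)
  then have "0 < \<bar>of_int n :: real\<bar>" "\<bar>of_int n :: real\<bar> < 1"
    by (simp_all add: zero_less_mult_iff)
  then show False by simp
qed

lemma cis_eq_cis_imp_eq: "\<bar>x - y\<bar> < 2 * pi \<Longrightarrow> cis x = cis y \<Longrightarrow> x = y"
  using cis_neq_cis[of x y] by fastforce

lemma cis_sign_neq:
  assumes "\<sigma> = 1 \<or> \<sigma> = -1" "0 < \<bar>x - y\<bar>" "\<bar>x - y\<bar> < 2 * pi"
  shows "cis (\<sigma> * x) \<noteq> cis (\<sigma> * y)"
  using assms cis_neq_cis[of "\<sigma> * x" "\<sigma> * y"] by (auto simp: abs_minus_commute)

lemma sin_half_cis: "complex_of_real (sin (x / 2)) = (cis x - 1) / (2 * \<i> * cis (x / 2))"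
proof -
  have "cis x = cis (x / 2) * cis (x / 2)" by (simp add: cis_mult)
  then have "(cis x - 1) / (2 * \<i> * cis (x / 2)) = (cis (x / 2) - cis (- (x / 2))) / (2 * \<i>)"
    by (simp add: field_simps flip: cis_inverse)
  also have "\<dots> = complex_of_real (sin (x / 2))" by (simp add: complex_eq_iff)
  finally show ?thesis by simp
qed

definition lis_param :: "real \<Rightarrow> real \<Rightarrow> real \<Rightarrow> real" where
  "lis_param t \<omega> \<beta> = sin (t / 2) * sin (\<omega> / 2) / (sin ((\<omega> + t - \<beta>) / 2) * sin (\<beta> / 2))"

lemma lis_param_cis:
  assumes "cis \<beta> \<noteq> 1" "cis t * cis \<omega> \<noteq> cis \<beta>"
  shows "complex_of_real (lis_param t \<omega> \<beta>)
    = (cis t - 1) * (cis \<omega> - 1) * cis \<beta> / ((cis t * cis \<omega> - cis \<beta>) * (cis \<beta> - 1))"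
proof -
  define a c e where "a = cis (t / 2)" and "c = cis (\<omega> / 2)" and "e = cis (\<beta> / 2)"
  have nz: "a \<noteq> 0" "c \<noteq> 0" "e \<noteq> 0" and sq: "cis \<beta> = e * e"
    by (simp_all add: a_def c_def e_def cis_mult)
  have half: "cis ((\<omega> + t - \<beta>) / 2) = a * c / e" "cis (\<omega> + t - \<beta>) = cis t * cis \<omega> / cis \<beta>"
    by (simp_all add: a_def c_def e_def cis_mult cis_divide add_divide_distrib diff_divide_distrib add.commute)
  then have sin_sum: "complex_of_real (sin ((\<omega> + t - \<beta>) / 2)) = (cis t * cis \<omega> - cis \<beta>) / (2 * \<i> * a * c * e)"
    unfolding sin_half_cis half using nz by (simp add: sq field_simps)
  have "(cis t * cis \<omega> - cis \<beta>) * (cis \<beta> - 1) \<noteq> 0"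
    using assms by simp
  then show ?thesis
    unfolding lis_param_def of_real_mult of_real_divide sin_sum
    unfolding sin_half_cis
    using nz by (simp add: sq flip: a_def c_def e_def) (simp add: field_simps minus_divide_left algebra_simps)
qed

lemma lis_param_uminus: "lis_param (- t) (- \<omega>) (- \<beta>) = lis_param t \<omega> \<beta>"
proof -
  have arg: "- \<omega> + - t - - \<beta> = - (\<omega> + t - \<beta>)" by simp
  show ?thesis unfolding lis_param_def arg minus_divide_left[symmetric] sin_minus by simp
qed

lemma sin_half_product_identity:
  fixes t \<omega> \<beta> :: real
  shows "sin ((\<omega> + t - \<beta>) / 2) * sin (\<beta> / 2) - sin (t / 2) * sin (\<omega> / 2)
     = sin ((\<beta> - t) / 2) * sin ((\<omega> - \<beta>) / 2)"
proof -
  have cos_sym: "cos (x - y) = cos (y - x)" for x y :: real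
    using cos_minus[of "x - y"] by simp
  have "sin ((\<omega> + t - \<beta>) / 2) * sin (\<beta> / 2) = (cos ((\<omega> + t) / 2 - \<beta>) - cos ((\<omega> + t) / 2)) / 2"
    "sin (t / 2) * sin (\<omega> / 2) = (cos ((\<omega> - t) / 2) - cos ((\<omega> + t) / 2)) / 2"
    "sin ((\<beta> - t) / 2) * sin ((\<omega> - \<beta>) / 2) = (cos ((\<omega> + t) / 2 - \<beta>) - cos ((\<omega> - t) / 2)) / 2"
    unfolding sin_times_sin by (simp_all add: algebra_simps diff_divide_distrib add_divide_distrib cos_sym)
  then show ?thesis by simp
qed

lemma lis_param_denominator_pos:
  assumes "0 \<le> t" "t \<le> \<beta>" "0 < \<beta>" "\<beta> < \<omega>" "\<omega> < 2 * pi"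
  shows "0 < sin ((\<omega> + t - \<beta>) / 2) * sin (\<beta> / 2)"
  using assms by (intro mult_pos_pos sin_gt_zero) auto

lemma lis_param_bounds:
  assumes "0 \<le> t" "t \<le> \<beta>" "0 < \<beta>" "\<beta> < \<omega>" "\<omega> < 2 * pi"
  shows "0 \<le> lis_param t \<omega> \<beta>" "lis_param t \<omega> \<beta> \<le> 1"
proof -
  have "0 \<le> sin (t / 2) * sin (\<omega> / 2)"
    and "0 \<le> sin ((\<beta> - t) / 2) * sin ((\<omega> - \<beta>) / 2)"
    using assms by (intro mult_nonneg_nonneg sin_ge_zero; simp)+
  then show "0 \<le> lis_param t \<omega> \<beta>" "lis_param t \<omega> \<beta> \<le> 1"
    using sin_half_product_identity[of \<omega> t \<beta>] lis_param_denominator_pos[OF assms]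
    unfolding lis_param_def by simp_all
qed

lemma lis_param_left [simp]: "lis_param 0 \<omega> \<beta> = 0"
  by (simp add: lis_param_def)

lemma lis_param_right:
  assumes "0 < \<beta>" "\<beta> < \<omega>" "\<omega> < 2 * pi"
  shows "lis_param \<beta> \<omega> \<beta> = 1"
proof -
  have "0 < sin (\<omega> / 2) * sin (\<beta> / 2)"
    using lis_param_denominator_pos[of \<beta> \<beta> \<omega>] assms by simp
  then have "sin (\<beta> / 2) * sin (\<omega> / 2) \<noteq> 0" by (metis less_irrefl mult.commute)
  then show ?thesis by (simp add: lis_param_def mult.commute)
qed

lemma continuous_on_lis_param:
  assumes "0 < \<beta>" "\<beta> < \<omega>" "\<omega> < 2 * pi"
  shows "continuous_on {0..\<beta>} (\<lambda>t. lis_param t \<omega> \<beta>)"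
proof -
  have "sin ((\<omega> + t - \<beta>) / 2) * sin (\<beta> / 2) \<noteq> 0" if "t \<in> {0..\<beta>}" for t
    using lis_param_denominator_pos[of t \<beta> \<omega>] that assms by auto
  then show ?thesis unfolding lis_param_def by (intro continuous_intros) auto
qed

lemma lis_param_image:
  assumes "0 < \<beta>" "\<beta> < \<omega>" "\<omega> < 2 * pi"
  shows "(\<lambda>t. lis_param t \<omega> \<beta>) ` {0..\<beta>} = {0..1}"
proof
  show "(\<lambda>t. lis_param t \<omega> \<beta>) ` {0..\<beta>} \<subseteq> {0..1}"
    using lis_param_bounds assms by fastforce
  show "{0..1} \<subseteq> (\<lambda>t. lis_param t \<omega> \<beta>) ` {0..\<beta>}"
  proof
    fix T :: real assume "T \<in> {0..1}"
    then show "T \<in> (\<lambda>t. lis_param t \<omega> \<beta>) ` {0..\<beta>}"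
      using IVT'[of "\<lambda>t. lis_param t \<omega> \<beta>" 0 T \<beta>] continuous_on_lis_param[OF assms]
        lis_param_right[OF assms] assms by force
  qed
qed

lemma lis_mobius_rotate:
  assumes "u \<noteq> 0" "Z * W \<noteq> V" "V \<noteq> 1"
  shows "lis_mobius u (u * V) (u * W) (u * Z)
    = u + (Z - 1) * (W - 1) * V / ((Z * W - V) * (V - 1)) * (u * V - u)"
proof -
  define T where "T = (Z - 1) * (W - 1) * V / ((Z * W - V) * (V - 1))"
  have "T * ((Z * W - V) * (V - 1)) = (Z - 1) * (W - 1) * V"
    unfolding T_def using assms by simp
  then have "(u * (u * V) - u * (u * W) - u * V * (u * W)) * (u * Z) + u * (u * V) * (u * W)
      = (u + T * (u * V - u)) * (u * (u * V) - u * W * (u * Z))"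
    by algebra
  moreover have "u * (u * V) - u * W * (u * Z) = u * u * (V - Z * W)" by algebra
  ultimately show ?thesis
    unfolding lis_mobius_def T_def[symmetric] using assms by (simp add: nonzero_divide_eq_eq)
qed

lemma LIS_arc_point:
  assumes u: "cmod u = 1" and \<sigma>: "\<sigma> = 1 \<or> \<sigma> = -1"
    and t: "0 \<le> t" "t \<le> \<beta>" and angles: "0 < \<beta>" "\<beta> < \<omega>" "\<omega> < 2 * pi"
    and v: "v = u * cis (\<sigma> * \<beta>)" and w: "w = u * cis (\<sigma> * \<omega>)"
  defines "z \<equiv> u * cis (\<sigma> * t)"
  shows "u * v \<noteq> w * z"
    and "LIS u v z w = lis_mobius u v w z"
    and "lis_mobius u v w z = u + of_real (lis_param t \<omega> \<beta>) * (v - u)"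
proof -
  have nz: "u \<noteq> 0" using u by auto
  have V: "cis (\<sigma> * \<beta>) \<noteq> 1"
    using cis_sign_neq[OF \<sigma>, of \<beta> 0] angles by simp
  have ZW: "cis (\<sigma> * t) * cis (\<sigma> * \<omega>) \<noteq> cis (\<sigma> * \<beta>)"
    using cis_sign_neq[OF \<sigma>, of "t + \<omega>" \<beta>] t angles by (simp add: cis_mult distrib_left)
  show prod: "u * v \<noteq> w * z"
    unfolding v w z_def using ZW nz by (simp add: ac_simps)
  have "v \<noteq> u" "z \<noteq> w"
    using V cis_sign_neq[OF \<sigma>, of t \<omega>] t angles nz by (auto simp: v w z_def)
  then show "LIS u v z w = lis_mobius u v w z"
    using LIS_unit_circle[of u v z w] prod u by (simp add: v w z_def norm_mult ac_simps)
  have "lis_param (\<sigma> * t) (\<sigma> * \<omega>) (\<sigma> * \<beta>) = lis_param t \<omega> \<beta>"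
    using \<sigma> lis_param_uminus by auto
  then have "complex_of_real (lis_param t \<omega> \<beta>)
      = (cis (\<sigma> * t) - 1) * (cis (\<sigma> * \<omega>) - 1) * cis (\<sigma> * \<beta>)
          / ((cis (\<sigma> * t) * cis (\<sigma> * \<omega>) - cis (\<sigma> * \<beta>)) * (cis (\<sigma> * \<beta>) - 1))"
    using lis_param_cis[OF V ZW] by simp
  then show "lis_mobius u v w z = u + of_real (lis_param t \<omega> \<beta>) * (v - u)"
    unfolding v w z_def using lis_mobius_rotate[OF nz ZW V] by simp
qed

lemma LIS_arc_image:
  assumes u: "cmod u = 1" and \<sigma>: "\<sigma> = 1 \<or> \<sigma> = -1"
    and angles: "0 < \<beta>" "\<beta> < \<omega>" "\<omega> < 2 * pi"
    and v: "v = u * cis (\<sigma> * \<beta>)" and w: "w = u * cis (\<sigma> * \<omega>)"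
  shows "(\<lambda>z. LIS u v z w) ` (\<lambda>t. u * cis (\<sigma> * t)) ` {0..\<beta>} = closed_segment u v"
proof -
  have "(\<lambda>z. LIS u v z w) ` (\<lambda>t. u * cis (\<sigma> * t)) ` {0..\<beta>}
      = (\<lambda>T. u + of_real T * (v - u)) ` (\<lambda>t. lis_param t \<omega> \<beta>) ` {0..\<beta>}"
    unfolding image_image using LIS_arc_point[OF u \<sigma> _ _ angles v w] by (intro image_cong) auto
  also have "\<dots> = (\<lambda>T. (1 - T) *\<^sub>R u + T *\<^sub>R v) ` {0..1}"
    unfolding lis_param_image[OF angles] by (intro image_cong) (auto simp: scaleR_conv_of_real algebra_simps)
  finally show ?thesis by (simp add: closed_segment_image_interval)
qed

lemma ccw3_asym: "ccw3 x y z \<Longrightarrow> \<not> ccw3 x z y"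
proof
  assume "ccw3 x y z"
  then have "x \<noteq> 0" unfolding ccw3_def by auto
  from \<open>ccw3 x y z\<close> obtain s t where "0 < s" "s < t" "t < 2 * pi" "y = x * cis s" "z = x * cis t"
    unfolding ccw3_def by blast
  moreover assume "ccw3 x z y"
  then obtain s' t' where "0 < s'" "s' < t'" "t' < 2 * pi" "z = x * cis s'" "y = x * cis t'"
    unfolding ccw3_def by blast
  ultimately have "cis s = cis t'" "cis t = cis s'" using \<open>x \<noteq> 0\<close> by simp_all
  then have "s = t'" "t = s'"
    using \<open>0 < s\<close> \<open>s < t\<close> \<open>t < 2 * pi\<close> \<open>0 < s'\<close> \<open>s' < t'\<close> \<open>t' < 2 * pi\<close>
    by (auto intro!: cis_eq_cis_imp_eq simp: abs_less_iff)
  with \<open>s < t\<close> \<open>s' < t'\<close> show False by simp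
qed

lemma arc_ccw_eq_image:
  assumes u: "cmod u = 1" and \<beta>: "0 < \<beta>" "\<beta> < 2 * pi" and v: "v = u * cis \<beta>"
  shows "arc_ccw u v = (\<lambda>t. u * cis t) ` {0..\<beta>}"
proof (intro set_eqI iffI)
  fix z assume "z \<in> arc_ccw u v"
  then consider "z = u" | "z = v" | "ccw3 u z v" unfolding arc_ccw_def by auto
  then show "z \<in> (\<lambda>t. u * cis t) ` {0..\<beta>}"
  proof cases
    case 3
    then obtain s t where st: "0 < s" "s < t" "t < 2 * pi" "z = u * cis s" "v = u * cis t"
      unfolding ccw3_def by auto
    then have "t = \<beta>" using u v \<beta> cis_eq_cis_imp_eq[of t \<beta>] by auto
    with st show ?thesis by auto
  qed (use \<beta> v in \<open>auto intro: image_eqI[of _ _ 0] image_eqI[of _ _ \<beta>]\<close>)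
next
  fix z assume "z \<in> (\<lambda>t. u * cis t) ` {0..\<beta>}"
  then obtain t where t: "0 \<le> t" "t \<le> \<beta>" "z = u * cis t" by auto
  have "ccw3 u z v" if "t \<noteq> 0" "t \<noteq> \<beta>"
    unfolding ccw3_def using that t u v \<beta> by (intro conjI exI[of _ t] exI[of _ \<beta>]) auto
  then have "z = u \<or> z = v \<or> ccw3 u z v" using t v by fastforce
  then show "z \<in> arc_ccw u v" unfolding arc_ccw_def using t u by (auto simp: norm_mult)
qed

lemma in_order5_angles:
  assumes "in_order5 u c d v w"
  obtains \<sigma> \<gamma> \<delta> \<beta> \<omega> where "\<sigma> = 1 \<or> \<sigma> = -1"
    and "0 < \<gamma>" "\<gamma> < \<delta>" "\<delta> < \<beta>" "\<beta> < \<omega>" "\<omega> < 2 * pi"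
    and "c = u * cis (\<sigma> * \<gamma>)" "d = u * cis (\<sigma> * \<delta>)" "v = u * cis (\<sigma> * \<beta>)" "w = u * cis (\<sigma> * \<omega>)"
    and "arc_containing u v c = (\<lambda>t. u * cis (\<sigma> * t)) ` {0..\<beta>}"
  using assms unfolding in_order5_def
proof (elim disjE)
  assume "ccw5 u c d v w"
  then obtain s2 s3 s4 s5 where s: "0 < s2" "s2 < s3" "s3 < s4" "s4 < s5" "s5 < 2 * pi"
    "c = u * cis s2" "d = u * cis s3" "v = u * cis s4" "w = u * cis s5" and u: "cmod u = 1"
    unfolding ccw5_def by blast
  then have "ccw3 u c v" unfolding ccw3_def by (intro conjI exI[of _ s2] exI[of _ s4]) auto
  then have "arc_containing u v c = (\<lambda>t. u * cis t) ` {0..s4}"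
    unfolding arc_containing_def using arc_ccw_eq_image[OF u, of s4 v] s by auto
  with s show thesis by (intro that[of 1 s2 s3 s4 s5]) auto
next
  assume "ccw5 w v d c u"
  then obtain s2 s3 s4 s5 where s: "0 < s2" "s2 < s3" "s3 < s4" "s4 < s5" "s5 < 2 * pi"
    "v = w * cis s2" "d = w * cis s3" "c = w * cis s4" "u = w * cis s5" and "cmod w = 1"
    unfolding ccw5_def by blast
  then have u: "cmod u = 1" and v: "cmod v = 1" by (simp_all add: norm_mult)
  have w: "w = u * cis (- 1 * s5)" unfolding s(9) by (simp add: cis_mult)
  have from_u: "w * cis s = u * cis (- 1 * (s5 - s))" for s unfolding w by (simp add: cis_mult)
  have pts: "c = u * cis (- 1 * (s5 - s4))" "d = u * cis (- 1 * (s5 - s3))"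
    "v = u * cis (- 1 * (s5 - s2))"
    unfolding s(6,7,8) from_u by simp_all
  have cis_2pi_minus: "cis (2 * pi - x) = cis (- 1 * x)" for x by (simp add: complex_eq_iff)
  have "ccw3 u v c" unfolding ccw3_def
    by (intro conjI exI[of _ "2 * pi - (s5 - s2)"] exI[of _ "2 * pi - (s5 - s4)"])
      (use s(1-5) u in \<open>auto simp: pts cis_2pi_minus\<close>)
  then have "arc_containing u v c = arc_ccw v u"
    using ccw3_asym unfolding arc_containing_def by auto
  also have "\<dots> = (\<lambda>t. v * cis t) ` {0..s5 - s2}"
    by (rule arc_ccw_eq_image[OF v]) (use s(1-5) in \<open>auto simp: pts cis_mult\<close>)
  also have "\<dots> = (\<lambda>t. u * cis (- 1 * t)) ` (\<lambda>t. (s5 - s2) - t) ` {0..s5 - s2}"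
    unfolding image_image pts(3) by (simp add: cis_mult algebra_simps)
  finally show thesis using s(1-5) pts w
    by (intro that[of "-1" "s5 - s4" "s5 - s3" "s5 - s2" s5]) auto
qed

theorem lemma3p12:
  fixes u c d v w a b :: complex
  assumes circ: "cmod u = 1" "cmod c = 1" "cmod d = 1" "cmod v = 1" "cmod w = 1"
    and ord: "in_order5 u c d v w"
    and a_def: "a = LIS u v c w"
    and b_def: "b = LIS u v d w"
  shows "abs_cross_ratio u a b v = abs_cross_ratio u c d v
       \<and> ((\<lambda>z. LIS u v z w) ` arc_containing u v c = closed_segment u v
         \<and> c \<in> arc_containing u v c \<and> d \<in> arc_containing u v c
         \<and> (u * v - u * w - v * w) * (u * v) - u * v * w * (- w) \<noteq> 0
         \<and> (\<forall>z \<in> arc_containing u v c.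
               LIS u v z w = ((u * v - u * w - v * w) * z + u * v * w) / (- w * z + u * v))
         \<and> LIS u v u w = u \<and> LIS u v v w = v \<and> a = LIS u v c w \<and> b = LIS u v d w)
       \<and> (parallel_lines u v c d \<longrightarrow>
           u * v = c * d \<and> a = ((u + v - d) * w - c * d) / (w - d)
                         \<and> b = ((u + v - c) * w - c * d) / (w - c))"
proof -
  obtain \<sigma> \<gamma> \<delta> \<beta> \<omega> where \<sigma>: "\<sigma> = 1 \<or> \<sigma> = -1"
    and angles: "0 < \<gamma>" "\<gamma> < \<delta>" "\<delta> < \<beta>" "\<beta> < \<omega>" "\<omega> < 2 * pi"
    and c: "c = u * cis (\<sigma> * \<gamma>)" and d: "d = u * cis (\<sigma> * \<delta>)"
    and v: "v = u * cis (\<sigma> * \<beta>)" and w: "w = u * cis (\<sigma> * \<omega>)"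
    and arc: "arc_containing u v c = (\<lambda>t. u * cis (\<sigma> * t)) ` {0..\<beta>}"
    using in_order5_angles[OF ord] by blast
  have \<beta>\<omega>: "0 < \<beta>" "\<beta> < \<omega>" "\<omega> < 2 * pi" using angles by linarith+
  note point = LIS_arc_point[OF circ(1) \<sigma> _ _ \<beta>\<omega> v w]
  have LIS_c: "LIS u v c w = lis_mobius u v w c" "u * v \<noteq> w * c" using point[of \<gamma>] angles c by auto
  have LIS_d: "LIS u v d w = lis_mobius u v w d" "u * v \<noteq> w * d" using point[of \<delta>] angles d by auto
  have LIS_u: "LIS u v u w = u" using point[of 0] \<beta>\<omega> by simp
  have LIS_v: "LIS u v v w = v" using point[of \<beta>] lis_param_right[OF \<beta>\<omega>] \<beta>\<omega> v by simp
  have distinct: "u \<noteq> w" "v \<noteq> w" "c \<noteq> w" "d \<noteq> w" "u \<noteq> v"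
    using cis_sign_neq[OF \<sigma>, of 0 \<omega>] cis_sign_neq[OF \<sigma>, of \<beta> \<omega>] cis_sign_neq[OF \<sigma>, of \<gamma> \<omega>]
      cis_sign_neq[OF \<sigma>, of \<delta> \<omega>] cis_sign_neq[OF \<sigma>, of 0 \<beta>] angles circ(1)
    by (auto simp: c d v w)
  have "(u * v - u * w - v * w) * (u * v) - u * v * w * (- w) \<noteq> 0"
    using circ(1,4) by (intro lis_mobius_det_nonzero distinct(1,2)) auto
  moreover have "\<forall>z \<in> arc_containing u v c.
      LIS u v z w = ((u * v - u * w - v * w) * z + u * v * w) / (- w * z + u * v)"
    using point(2) unfolding arc lis_mobius_def by (auto simp: algebra_simps)
  moreover have "c \<in> arc_containing u v c" "d \<in> arc_containing u v c"
    using angles unfolding arc by (auto simp: c d)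
  moreover have "abs_cross_ratio u a b v = abs_cross_ratio u c d v"
    using abs_cross_ratio_lis_mobius[OF circ(1,4) LIS_c(2) LIS_d(2) distinct(1,2)]
    by (simp add: a_def b_def LIS_c LIS_d)
  ultimately show ?thesis
    using LIS_arc_image[OF circ(1) \<sigma> \<beta>\<omega> v w] arc LIS_u LIS_v a_def b_def LIS_c LIS_d
      lis_mobius_parallel_chords[OF circ(1,4,2,3) distinct(5,3,4)]
    by auto
qed

end
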